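(* Consider a nonrelativistic quantum system with $n$ degrees of freedom and Hamiltonian $$H(\hat q,\hat p)=\tfrac12\hat p\cdot\mathbf M\hat p+\tfrac12\hat q\cdot\mathbf C\hat p+\tfrac12\hat p\cdot\mathbf C^\top\hat q+\hat p\cdot\xi_p+U(\hat q),$$ where $\mathbf M$ is a real, symmetric, positive definite $n\times n$ matrix, $\mathbf C$ is a real $n\times n$ matrix, $\xi_p\in\mathbb R^n$ and $U$ is a real function. Suppose the system is in a pure state with wave function $\psi(q,t)=\Omega(q,t)e^{iS(q,t)/\hbar}$, $\Omega=|\psi|$. For $T_0\in L^2(\Omega^2)$ let $$\mathcal L_Q(T_0,t):=\frac{\hbar^2}{8}\,\frac{\langle\partial_qT_0\rangle\cdot\mathbf M\,\langle\partial_qT_0\rangle}{\mathrm{Cov}(T_0,T_0)},$$ and let $\langle Q(t)\rangle:=-\frac{\hbar^2}{2}\int_{\mathbb R^n}d^nq\,\Omega\,\partial_q\cdot\mathbf M\partial_q\Omega$ be the mean value of the quantum potential. Then there is a specific function $T_\ast\in L^2(\Omega^2)$ extremizing $\mathcal L_Q(\cdot,t)$, and the resulting bound depends only on $\Omega^2$: $$\langle Q(t)\rangle\ \ge\ \frac{\hbar^2}{8}\,\lambda_\wedge(\mathbf Q),\qquad \mathbf Q:=-\big\langle\partial^2_{qq}\ln\Omega^2\big\rangle\,\mathbf M,$$ where $\lambda_\wedge(\mathbf Q)$ denotes the largest eigenvalue of the real $n\times n$ matrix $\mathbf Q$.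
   Context: $\partial_q=(\partial/\partial q_1,\dots,\partial/\partial q_n)^\top$ and $\partial^2_{qq}$ denotes the Hessian matrix with respect to $q$. The amplitude $\Omega:\mathbb R^n\times\mathbb R\to\mathbb R_+$ is assumed continuous and twice continuously differentiable, with $\int_{\mathbb R^n}\Omega(q,t)^2d^nq=1$ for all $t$ and $\Omega(q,t)\to0$ as $\|q\|\to\infty$. $L^2(\Omega^2)$ denotes the set of functions on $\mathbb R^n$ square-integrable with respect to $\Omega^2d^nq$, all assumed continuous with continuous first and second derivatives. Means and covariances are with respect to $\Omega^2$: $\langle T\rangle:=\int d^nq\,\Omega^2T$ (componentwise for vector or matrix valued $T$), $\mathrm{Cov}(T_i,T_j):=\langle T_iT_j\rangle-\langle T_i\rangle\langle T_j\rangle$. *)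

theory Defs
  imports "HOL-Analysis.Analysis"
begin

definition pderiv_i :: "'n::finite \<Rightarrow> (real^'n \<Rightarrow> real) \<Rightarrow> real^'n \<Rightarrow> real" where
  "pderiv_i i f x = frechet_derivative f (at x) (axis i 1)"

definition grad :: "(real^'n::finite \<Rightarrow> real) \<Rightarrow> real^'n \<Rightarrow> real^'n" where
  "grad f x = (\<chi> i. pderiv_i i f x)"

definition hess :: "(real^'n::finite \<Rightarrow> real) \<Rightarrow> real^'n \<Rightarrow> real^'n^'n" where
  "hess f x = (\<chi> i j. pderiv_i i (\<lambda>y. pderiv_i j f y) x)"

definition C1_fun :: "(real^'n::finite \<Rightarrow> real) \<Rightarrow> bool" where
  "C1_fun f \<longleftrightarrow> (\<forall>x. f differentiable (at x)) \<and> continuous_on UNIV (grad f)"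

definition C2_fun :: "(real^'n::finite \<Rightarrow> real) \<Rightarrow> bool" where
  "C2_fun f \<longleftrightarrow> C1_fun f \<and> (\<forall>x. grad f differentiable (at x)) \<and> continuous_on UNIV (hess f)"

definition wmean :: "(real^'n::finite \<Rightarrow> real) \<Rightarrow> (real^'n \<Rightarrow> real) \<Rightarrow> real" where
  "wmean \<Omega> T = integral\<^sup>L lborel (\<lambda>q. (\<Omega> q)\<^sup>2 * T q)"

definition wmean_vec :: "(real^'n::finite \<Rightarrow> real) \<Rightarrow> (real^'n \<Rightarrow> real^'n) \<Rightarrow> real^'n" where
  "wmean_vec \<Omega> V = (\<chi> i. wmean \<Omega> (\<lambda>q. V q $ i))"

definition wmean_mat :: "(real^'n::finite \<Rightarrow> real) \<Rightarrow> (real^'n \<Rightarrow> real^'n^'n) \<Rightarrow> real^'n^'n" where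
  "wmean_mat \<Omega> A = (\<chi> i j. wmean \<Omega> (\<lambda>q. A q $ i $ j))"

definition wcov :: "(real^'n::finite \<Rightarrow> real) \<Rightarrow> (real^'n \<Rightarrow> real) \<Rightarrow> (real^'n \<Rightarrow> real) \<Rightarrow> real" where
  "wcov \<Omega> T1 T2 = wmean \<Omega> (\<lambda>q. T1 q * T2 q) - wmean \<Omega> T1 * wmean \<Omega> T2"

text \<open>Admissible test functions: elements of L^2(Omega^2) (continuously differentiable),
  whose gradient has a finite Omega^2-mean, so that L_Q is defined.\<close>
definition admissible :: "(real^'n::finite \<Rightarrow> real) \<Rightarrow> (real^'n \<Rightarrow> real) \<Rightarrow> bool" where
  "admissible \<Omega> T \<longleftrightarrow> C1_fun T
     \<and> integrable lborel (\<lambda>q. (\<Omega> q)\<^sup>2 * (T q)\<^sup>2)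
     \<and> (\<forall>i. integrable lborel (\<lambda>q. (\<Omega> q)\<^sup>2 * grad T q $ i))"

definition LQ :: "real \<Rightarrow> real^'n^'n \<Rightarrow> (real^'n::finite \<Rightarrow> real) \<Rightarrow> (real^'n \<Rightarrow> real) \<Rightarrow> real" where
  "LQ hbar M \<Omega> T = hbar\<^sup>2 / 8 *
     ((wmean_vec \<Omega> (grad T) \<bullet> (M *v wmean_vec \<Omega> (grad T))) / wcov \<Omega> T T)"

definition mean_quantum_potential :: "real \<Rightarrow> real^'n^'n \<Rightarrow> (real^'n::finite \<Rightarrow> real) \<Rightarrow> real" where
  "mean_quantum_potential hbar M \<Omega> = - (hbar\<^sup>2 / 2) *
     integral\<^sup>L lborel (\<lambda>q. \<Omega> q * (\<Sum>i\<in>UNIV. \<Sum>j\<in>UNIV. M $ i $ j * hess \<Omega> q $ i $ j))"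

definition Qmat :: "real^'n^'n \<Rightarrow> (real^'n::finite \<Rightarrow> real) \<Rightarrow> real^'n^'n" where
  "Qmat M \<Omega> = (- wmean_mat \<Omega> (hess (\<lambda>q. ln ((\<Omega> q)\<^sup>2)))) ** M"

definition largest_eigenvalue :: "real^'n^'n::finite \<Rightarrow> real" where
  "largest_eigenvalue A = Max {l. \<exists>v. v \<noteq> 0 \<and> A *v v = l *\<^sub>R v}"

end

theory Submission
  imports Defs
begin

text \<open>
  Let F = 4 (int d_i Omega d_j Omega)_ij be the Fisher information matrix of the density Omega^2.
  Integrating by parts, -<d^2 ln Omega^2> = F, so Q = F M, and <d_i T> = -2 int (T - <T>) Omega d_i Omega.
  Cauchy-Schwarz then gives the Cramer-Rao bound (w . <d T>)^2 <= Cov(T,T) (w . F w); taking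
  w = M <d T> shows that L_Q(T) is at most hbar^2/8 times the maximum of the generalized Rayleigh
  quotient (M u . F M u) / (u . M u), which is the largest eigenvalue of F M. The bound is attained
  by T = (M u . d Omega) / Omega for a maximizing u, and pointwise Cauchy-Schwarz for the form M
  bounds the maximum by 4 int d Omega . M d Omega = 8 <Q> / hbar^2.

  The boundary terms of the integrations by parts vanish by integrability alone.
\<close>

section \<open>Calculus on R^n\<close>

lemma lborel_integral_translate:
  fixes f :: "'a::euclidean_space \<Rightarrow> real"
  assumes "f \<in> borel_measurable borel"
  shows "integral\<^sup>L lborel (\<lambda>x. f (x + c)) = integral\<^sup>L lborel f"
proof -
  have "integral\<^sup>L lborel f = integral\<^sup>L (distr lborel borel ((+) c)) f"
    by (simp add: lborel_distr_plus)
  also have "\<dots> = integral\<^sup>L lborel (\<lambda>x. f (c + x))"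
    by (rule integral_distr) (auto simp: assms)
  finally show ?thesis by (simp add: add.commute)
qed

lemma lborel_integrable_translate:
  fixes f :: "'a::euclidean_space \<Rightarrow> real"
  assumes "f \<in> borel_measurable borel" "integrable lborel f"
  shows "integrable lborel (\<lambda>x. f (x + c))"
proof -
  have "integrable (distr lborel borel ((+) c)) f"
    by (simp add: lborel_distr_plus assms)
  then have "integrable lborel (\<lambda>x. f (c + x))"
    by (subst (asm) integrable_distr_eq) (auto simp: assms)
  then show ?thesis by (simp add: add.commute)
qed

text \<open>Integrate f (x + e) - f x = int_0^1 g (x + s e) ds over x: by Fubini and translation
  invariance the right side becomes the integral of g and the left side 0.\<close>
lemma integral_directional_derivative_eq_0:
  fixes f g :: "'a::euclidean_space \<Rightarrow> real"
  assumes deriv: "\<And>x t. ((\<lambda>s. f (x + s *\<^sub>R e)) has_real_derivative g (x + t *\<^sub>R e)) (at t)"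
    and g_cont: "continuous_on UNIV g"
    and f_int: "integrable lborel f" and g_int: "integrable lborel g"
  shows "integral\<^sup>L lborel g = 0"
proof -
  have f_meas: "f \<in> borel_measurable borel"
    using borel_measurable_integrable[OF f_int] by simp
  have g_line_cont: "continuous_on A (\<lambda>s. g (x + s *\<^sub>R e))" for x A
    by (intro continuous_on_compose2[OF g_cont] continuous_intros) auto
  have g_meas [measurable]: "g \<in> borel_measurable borel"
    using g_cont by (rule borel_measurable_continuous_onI)
  define h where "h = (\<lambda>(s::real, x::'a). indicator {0..1} s * g (x + s *\<^sub>R e))"
  have h_meas: "h \<in> borel_measurable (lborel \<Otimes>\<^sub>M lborel)"
  proof -
    have "(\<lambda>p::real \<times> 'a. g (snd p + fst p *\<^sub>R e)) \<in> borel_measurable borel"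
      by (intro borel_measurable_continuous_onI continuous_on_compose2[OF g_cont] continuous_intros) auto
    moreover have "(indicator ({0..1} \<times> UNIV) :: real \<times> 'a \<Rightarrow> real) \<in> borel_measurable borel"
      by (intro borel_measurable_indicator borel_closed closed_Times) auto
    moreover have "h = (\<lambda>p. indicator ({0..1} \<times> UNIV) p * g (snd p + fst p *\<^sub>R e))"
      by (auto simp: h_def fun_eq_iff indicator_def)
    ultimately show ?thesis unfolding lborel_prod measurable_lborel1 by simp
  qed
  have h_int: "integrable (lborel \<Otimes>\<^sub>M lborel) h"
  proof (rule lborel_pair.Fubini_integrable[OF h_meas])
    have "integral\<^sup>L lborel (\<lambda>x. norm (g (x + s *\<^sub>R e))) = integral\<^sup>L lborel (\<lambda>x. norm (g x))" for s
      by (rule lborel_integral_translate[where f="\<lambda>x. norm (g x)"]) simp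
    then have "(\<lambda>s. LINT x|lborel. norm (h (s, x))) = (\<lambda>s. indicator {0..1} s * (LINT x|lborel. norm (g x)))"
      by (auto simp: h_def indicator_def fun_eq_iff)
    then show "integrable lborel (\<lambda>s. LINT x|lborel. norm (h (s, x)))"
      by simp
    show "AE s in lborel. integrable lborel (\<lambda>x. h (s, x))"
      by (auto simp: h_def g_int intro!: lborel_integrable_translate)
  qed
  have FTC: "(LINT s|lborel. h (s, x)) = f (x + e) - f x" for x
  proof -
    have "(LINT s|lborel. h (s, x)) = (LINT s|lborel. indicator {0..1} s *\<^sub>R g (x + s *\<^sub>R e))"
      by (simp add: h_def)
    also have "\<dots> = f (x + 1 *\<^sub>R e) - f (x + 0 *\<^sub>R e)"
      using deriv g_line_cont
      by (intro integral_FTC_atLeastAtMost)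
        (auto simp: has_real_derivative_iff_has_vector_derivative has_vector_derivative_at_within)
    finally show ?thesis by simp
  qed
  have "integral\<^sup>L lborel g = (LINT s|lborel. LINT x|lborel. h (s, x))"
  proof -
    have "(\<lambda>s. LINT x|lborel. h (s, x)) = (\<lambda>s. indicator {0..1} s * integral\<^sup>L lborel g)"
      by (auto simp: h_def lborel_integral_translate fun_eq_iff)
    then show ?thesis by simp
  qed
  also have "\<dots> = (LINT x|lborel. LINT s|lborel. h (s, x))"
    using lborel_pair.Fubini_integral[of "\<lambda>s x. h (s, x)"] h_int by simp
  also have "\<dots> = (LINT x|lborel. f (x + e) - f x)"
    by (simp add: FTC)
  also have "\<dots> = 0"
    using lborel_integral_translate[OF f_meas] lborel_integrable_translate[OF f_meas f_int] f_int
    by simp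
  finally show ?thesis .
qed

lemma grad_nth [simp]: "grad f q $ i = pderiv_i i f q"
  by (simp add: grad_def)

lemma hess_nth [simp]: "hess f q $ i $ j = pderiv_i i (pderiv_i j f) q"
  by (simp add: hess_def)

lemma pderiv_i_eq:
  fixes f :: "real^'n \<Rightarrow> real"
  shows "(f has_derivative f') (at x) \<Longrightarrow> pderiv_i i f x = f' (axis i 1)"
  unfolding pderiv_i_def by (metis frechet_derivative_at)

lemma pderiv_i_mult:
  fixes f g :: "real^'n \<Rightarrow> real"
  assumes "f differentiable (at x)" "g differentiable (at x)"
  shows "pderiv_i i (\<lambda>x. f x * g x) x = pderiv_i i f x * g x + f x * pderiv_i i g x"
  using has_derivative_mult[OF assms[unfolded frechet_derivative_works]]
  by (subst pderiv_i_eq) (auto simp: pderiv_i_def algebra_simps)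

lemma pderiv_i_cmult:
  fixes f :: "real^'n \<Rightarrow> real"
  assumes "f differentiable (at x)"
  shows "pderiv_i i (\<lambda>x. c * f x) x = c * pderiv_i i f x"
  using has_derivative_mult[OF has_derivative_const[of c] assms[unfolded frechet_derivative_works]]
  by (subst pderiv_i_eq) (auto simp: pderiv_i_def)

lemma pderiv_i_const [simp]: "pderiv_i i (\<lambda>x::real^'n. c::real) x = 0"
  using has_derivative_const[of c] by (subst pderiv_i_eq) auto

lemma pderiv_i_divide:
  fixes f g :: "real^'n \<Rightarrow> real"
  assumes "f differentiable (at x)" "g differentiable (at x)" "g x \<noteq> 0"
  shows "pderiv_i i (\<lambda>x. f x / g x) x = (pderiv_i i f x * g x - f x * pderiv_i i g x) / (g x)\<^sup>2"
  using has_derivative_divide[OF assms(1,2)[unfolded frechet_derivative_works] assms(3)] assms(3)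
  by (subst pderiv_i_eq) (auto simp: pderiv_i_def field_simps power2_eq_square)

lemma pderiv_i_ln:
  fixes f :: "real^'n \<Rightarrow> real"
  assumes "f differentiable (at x)" "f x > 0"
  shows "pderiv_i i (\<lambda>x. ln (f x)) x = pderiv_i i f x / f x"
  using has_derivative_ln[OF assms(2) assms(1)[unfolded frechet_derivative_works]]
  by (subst pderiv_i_eq) (auto simp: pderiv_i_def field_simps)

lemma pderiv_i_sum:
  fixes f :: "'k \<Rightarrow> real^'n \<Rightarrow> real"
  assumes "finite S" "\<And>k. k \<in> S \<Longrightarrow> f k differentiable (at x)"
  shows "pderiv_i i (\<lambda>x. \<Sum>k\<in>S. f k x) x = (\<Sum>k\<in>S. pderiv_i i (f k) x)"
  using has_derivative_sum[of S f "\<lambda>k. frechet_derivative (f k) (at x)"] assms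
  by (subst pderiv_i_eq) (auto simp: pderiv_i_def frechet_derivative_works)

lemma has_real_derivative_pderiv_i_line:
  fixes f :: "real^'n \<Rightarrow> real"
  assumes "f differentiable (at (x + t *\<^sub>R axis i 1))"
  shows "((\<lambda>s. f (x + s *\<^sub>R axis i 1)) has_real_derivative pderiv_i i f (x + t *\<^sub>R axis i 1)) (at t)"
proof -
  let ?f' = "frechet_derivative f (at (x + t *\<^sub>R axis i 1))"
  have "((\<lambda>s. x + s *\<^sub>R axis i 1) has_derivative (\<lambda>h. h *\<^sub>R axis i 1)) (at t)"
    by (auto intro!: derivative_eq_intros)
  from has_derivative_compose[OF this assms[unfolded frechet_derivative_works]]
  have "((\<lambda>s. f (x + s *\<^sub>R axis i 1)) has_derivative (\<lambda>h. ?f' (h *\<^sub>R axis i 1))) (at t)" .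
  moreover have "linear ?f'"
    using assms[unfolded frechet_derivative_works] has_derivative_linear by blast
  ultimately have "((\<lambda>s. f (x + s *\<^sub>R axis i 1)) has_derivative (\<lambda>h. h * pderiv_i i f (x + t *\<^sub>R axis i 1))) (at t)"
    by (simp add: pderiv_i_def linear_scale)
  then show ?thesis
    unfolding has_field_derivative_def by (rule has_derivative_eq_rhs) (auto simp: mult.commute)
qed

lemma integral_pderiv_i_eq_0:
  fixes f :: "real^'n \<Rightarrow> real"
  assumes "\<And>x. f differentiable (at x)" "continuous_on UNIV (pderiv_i i f)"
    "integrable lborel f" "integrable lborel (pderiv_i i f)"
  shows "integral\<^sup>L lborel (pderiv_i i f) = 0"
  by (rule integral_directional_derivative_eq_0[where f=f and e="axis i 1"])
    (auto intro: has_real_derivative_pderiv_i_line assms)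

lemma integrable_continuous_dominated:
  fixes f g :: "real^'n \<Rightarrow> real"
  assumes "integrable lborel g" "continuous_on UNIV f" "\<And>x. \<bar>f x\<bar> \<le> g x"
  shows "integrable lborel f"
proof (rule Bochner_Integration.integrable_bound[OF assms(1)])
  show "f \<in> borel_measurable lborel"
    using assms(2) by (simp add: borel_measurable_continuous_onI)
  show "AE x in lborel. norm (f x) \<le> norm (g x)"
    using assms(3) by (auto intro: order_trans[OF _ abs_ge_self])
qed

lemma continuous_on_UNIV_if_differentiable:
  fixes f :: "'a::real_normed_vector \<Rightarrow> 'b::real_normed_vector"
  shows "(\<And>x. f differentiable (at x)) \<Longrightarrow> continuous_on UNIV f"
  by (meson continuous_at_imp_continuous_on differentiable_imp_continuous_within)

section \<open>Quadratic forms and the generalized Rayleigh quotient\<close>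

lemma quadratic_nonneg_imp_discriminant:
  fixes a b c :: real
  assumes nonneg: "\<And>t. 0 \<le> a + 2 * t * b + t\<^sup>2 * c" and "c \<ge> 0"
  shows "b\<^sup>2 \<le> a * c"
proof (cases "c = 0")
  case True
  have "b = 0"
  proof (rule ccontr)
    assume "b \<noteq> 0"
    have "0 \<le> a + 2 * (- (a + 1) / (2 * b)) * b + (- (a + 1) / (2 * b))\<^sup>2 * c" by (rule nonneg)
    then show False using \<open>b \<noteq> 0\<close> True by (simp add: field_simps)
  qed
  then show ?thesis using True by simp
next
  case False
  with \<open>c \<ge> 0\<close> have "c > 0" by simp
  have "0 \<le> a + 2 * (- b / c) * b + (- b / c)\<^sup>2 * c" by (rule nonneg)
  also have "\<dots> = a - b\<^sup>2 / c"
    using \<open>c > 0\<close> by (simp add: field_simps power2_eq_square)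
  finally show ?thesis using \<open>c > 0\<close> by (simp add: field_simps)
qed

lemma integral_Cauchy_Schwarz:
  fixes f g :: "'a \<Rightarrow> real"
  assumes "integrable M (\<lambda>x. f x * f x)" "integrable M (\<lambda>x. g x * g x)" "integrable M (\<lambda>x. f x * g x)"
  shows "(integral\<^sup>L M (\<lambda>x. f x * g x))\<^sup>2 \<le> integral\<^sup>L M (\<lambda>x. f x * f x) * integral\<^sup>L M (\<lambda>x. g x * g x)"
proof (rule quadratic_nonneg_imp_discriminant)
  fix t
  have "0 \<le> integral\<^sup>L M (\<lambda>x. (f x + t * g x) * (f x + t * g x))"
    by (rule Bochner_Integration.integral_nonneg) auto
  also have "(\<lambda>x. (f x + t * g x) * (f x + t * g x)) = (\<lambda>x. f x * f x + 2 * t * (f x * g x) + t\<^sup>2 * (g x * g x))"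
    by (auto simp: fun_eq_iff algebra_simps power2_eq_square)
  finally show "0 \<le> integral\<^sup>L M (\<lambda>x. f x * f x) + 2 * t * integral\<^sup>L M (\<lambda>x. f x * g x) + t\<^sup>2 * integral\<^sup>L M (\<lambda>x. g x * g x)"
    using assms by simp
qed (rule Bochner_Integration.integral_nonneg, auto)

lemma symmetric_matrix_inner:
  fixes M :: "real^'n^'n"
  assumes "transpose M = M"
  shows "x \<bullet> (M *v y) = (M *v x) \<bullet> y"
  by (metis assms dot_lmul_matrix vector_transpose_matrix)

lemma quadratic_form_add_scaleR:
  fixes M :: "real^'n^'n"
  assumes "transpose M = M"
  shows "(x + t *\<^sub>R y) \<bullet> (M *v (x + t *\<^sub>R y)) = x \<bullet> (M *v x) + 2 * t * (x \<bullet> (M *v y)) + t\<^sup>2 * (y \<bullet> (M *v y))"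
  using symmetric_matrix_inner[OF assms, of y x]
  by (simp add: inner_commute power2_eq_square algebra_simps)

lemma pos_def_nonneg:
  fixes M :: "real^'n^'n"
  assumes "\<And>v. v \<noteq> 0 \<Longrightarrow> v \<bullet> (M *v v) > 0"
  shows "v \<bullet> (M *v v) \<ge> 0"
  using assms[of v] by (cases "v = 0") auto

lemma psd_Cauchy_Schwarz:
  fixes K :: "real^'n^'n"
  assumes "transpose K = K" and psd: "\<And>v. 0 \<le> v \<bullet> (K *v v)"
  shows "(x \<bullet> (K *v y))\<^sup>2 \<le> (x \<bullet> (K *v x)) * (y \<bullet> (K *v y))"
proof (rule quadratic_nonneg_imp_discriminant)
  show "0 \<le> x \<bullet> (K *v x) + 2 * t * (x \<bullet> (K *v y)) + t\<^sup>2 * (y \<bullet> (K *v y))" for t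
    using psd[of "x + t *\<^sub>R y"] by (simp add: quadratic_form_add_scaleR[OF assms(1)])
qed (rule psd)

lemma psd_form_eq_0_imp_kernel:
  fixes K :: "real^'n^'n"
  assumes "transpose K = K" "\<And>v. 0 \<le> v \<bullet> (K *v v)" "u \<bullet> (K *v u) = 0"
  shows "K *v u = 0"
proof -
  have "(u \<bullet> (K *v (K *v u)))\<^sup>2 \<le> 0"
    using psd_Cauchy_Schwarz[OF assms(1,2), of u "K *v u"] assms(3) by simp
  moreover have "u \<bullet> (K *v (K *v u)) = (K *v u) \<bullet> (K *v u)"
    by (rule symmetric_matrix_inner[OF assms(1)])
  ultimately show ?thesis by simp
qed

lemma continuous_on_matrix_vector_mult [continuous_intros]:
  fixes A :: "real^'n^'m"
  shows "continuous_on S f \<Longrightarrow> continuous_on S (\<lambda>x. A *v f x)"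
  by (rule continuous_on_compose2[OF matrix_vector_mult_linear_continuous_on]) auto

lemma Rayleigh_quotient_attains_max:
  fixes F M :: "real^'n^'n"
  assumes M_pd: "\<And>v. v \<noteq> 0 \<Longrightarrow> v \<bullet> (M *v v) > 0"
  obtains u0 lam where "u0 \<noteq> 0" "(M *v u0) \<bullet> (F *v (M *v u0)) = lam * (u0 \<bullet> (M *v u0))"
    "\<And>u. (M *v u) \<bullet> (F *v (M *v u)) \<le> lam * (u \<bullet> (M *v u))"
proof -
  define R where "R u = ((M *v u) \<bullet> (F *v (M *v u))) / (u \<bullet> (M *v u))" for u
  have R_scaleR: "R (c *\<^sub>R u) = R u" if "c \<noteq> 0" for c u
    using that by (simp add: R_def matrix_vector_mult_scaleR power2_eq_square)
  have R_cont: "continuous_on (sphere 0 1) R"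
    unfolding R_def
  proof (intro continuous_intros ballI)
    fix u :: "real^'n" assume "u \<in> sphere 0 1"
    then have "u \<noteq> 0" by auto
    then show "u \<bullet> (M *v u) \<noteq> 0" using M_pd[of u] by simp
  qed
  have "sphere (0::real^'n) 1 \<noteq> {}" by simp
  from continuous_attains_sup[OF compact_sphere this R_cont]
  obtain u0 where u0: "u0 \<in> sphere 0 1" "\<And>u. u \<in> sphere 0 1 \<Longrightarrow> R u \<le> R u0"
    by blast
  have "(M *v u) \<bullet> (F *v (M *v u)) \<le> R u0 * (u \<bullet> (M *v u))" for u
  proof (cases "u = 0")
    case False
    have "R u = R ((1 / norm u) *\<^sub>R u)" using False by (simp add: R_scaleR)
    also have "\<dots> \<le> R u0" using False by (intro u0(2)) auto
    finally show ?thesis using M_pd[OF False] by (simp add: R_def divide_le_eq)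
  qed simp
  moreover have "u0 \<noteq> 0" using u0(1) by auto
  ultimately show thesis
    using M_pd[of u0] by (intro that[of u0 "R u0"]) (auto simp: R_def)
qed

lemma eigenvectors_mult_orthogonal:
  fixes F M :: "real^'n^'n"
  assumes F_sym: "transpose F = F" and M_sym: "transpose M = M"
    and a: "F *v (M *v a) = l *\<^sub>R a" and b: "F *v (M *v b) = l' *\<^sub>R b" and "l \<noteq> l'"
  shows "a \<bullet> (M *v b) = 0"
proof -
  have "l * ((M *v b) \<bullet> a) = (M *v b) \<bullet> (F *v (M *v a))"
    by (simp add: a)
  also have "\<dots> = (M *v a) \<bullet> (F *v (M *v b))"
    using symmetric_matrix_inner[OF F_sym, of "M *v b" "M *v a"] by (metis inner_commute)
  also have "\<dots> = l' * ((M *v a) \<bullet> b)"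
    by (simp add: b)
  finally have "l * ((M *v b) \<bullet> a) = l' * ((M *v a) \<bullet> b)" .
  moreover have "(M *v b) \<bullet> a = a \<bullet> (M *v b)" "(M *v a) \<bullet> b = a \<bullet> (M *v b)"
    using symmetric_matrix_inner[OF M_sym, of a b] by (simp_all add: inner_commute)
  ultimately have "(l - l') * (a \<bullet> (M *v b)) = 0"
    by (simp add: left_diff_distrib)
  then show ?thesis using \<open>l \<noteq> l'\<close> by simp
qed

text \<open>Eigenvectors of F M for distinct eigenvalues are M-orthogonal, hence independent.\<close>
lemma finite_eigenvalues_symmetric_mult_pos_def:
  fixes F M :: "real^'n^'n"
  assumes F_sym: "transpose F = F" and M_sym: "transpose M = M"
    and M_pd: "\<And>v. v \<noteq> 0 \<Longrightarrow> v \<bullet> (M *v v) > 0"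
  shows "finite {l. \<exists>v. v \<noteq> 0 \<and> (F ** M) *v v = l *\<^sub>R v}"
proof -
  define S where "S = {l. \<exists>v. v \<noteq> 0 \<and> (F ** M) *v v = l *\<^sub>R v}"
  define ev where "ev l = (SOME v. v \<noteq> 0 \<and> (F ** M) *v v = l *\<^sub>R v)" for l
  have ev: "ev l \<noteq> 0 \<and> F *v (M *v ev l) = l *\<^sub>R ev l" if "l \<in> S" for l
    using someI_ex[of "\<lambda>v. v \<noteq> 0 \<and> (F ** M) *v v = l *\<^sub>R v"] that
    unfolding S_def ev_def by (auto simp: matrix_vector_mul_assoc)
  have orth: "ev l \<bullet> (M *v ev l') = 0" if "l \<in> S" "l' \<in> S" "l \<noteq> l'" for l l'
    using ev[OF that(1)] ev[OF that(2)] that(3) by (intro eigenvectors_mult_orthogonal[OF F_sym M_sym]) auto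
  have "inj_on ev S"
  proof
    fix l l' assume "l \<in> S" "l' \<in> S" "ev l = ev l'"
    then have "l *\<^sub>R ev l = l' *\<^sub>R ev l" using ev by metis
    then show "l = l'" using ev[OF \<open>l \<in> S\<close>] by (simp add: scaleR_cancel_right)
  qed
  moreover have "independent (ev ` S)"
    unfolding real_vector.independent_explicit_finite_subsets
  proof (intro allI impI ballI)
    fix T u v assume T: "T \<subseteq> ev ` S" "finite T" and sum0: "(\<Sum>v\<in>T. u v *\<^sub>R v) = 0" and "v \<in> T"
    have "(\<Sum>x\<in>T - {v}. u x * (x \<bullet> (M *v v))) = 0"
    proof (rule sum.neutral, rule ballI)
      fix x assume x: "x \<in> T - {v}"
      then obtain l l' where "l \<in> S" "l' \<in> S" "x = ev l" "v = ev l'" "l \<noteq> l'"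
        using T \<open>v \<in> T\<close> by blast
      then show "u x * (x \<bullet> (M *v v)) = 0" using orth by simp
    qed
    then have "u v * (v \<bullet> (M *v v)) = (\<Sum>x\<in>T. u x * (x \<bullet> (M *v v)))"
      using sum.remove[OF T(2) \<open>v \<in> T\<close>, of "\<lambda>x. u x * (x \<bullet> (M *v v))"] by simp
    also have "\<dots> = (\<Sum>x\<in>T. u x *\<^sub>R x) \<bullet> (M *v v)"
      by (simp add: inner_sum_left)
    finally have "u v * (v \<bullet> (M *v v)) = 0" using sum0 by simp
    moreover have "v \<noteq> 0" using T \<open>v \<in> T\<close> ev by auto
    ultimately show "u v = 0" using M_pd[of v] by simp
  qed
  then have "finite (ev ` S)" using independent_bound by blast
  ultimately show ?thesis using finite_imageD unfolding S_def by blast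
qed

lemma Rayleigh_quotient_max_imp_eigenvector:
  fixes F M :: "real^'n^'n"
  assumes F_sym: "transpose F = F" and M_sym: "transpose M = M"
    and M_pd: "\<And>v. v \<noteq> 0 \<Longrightarrow> v \<bullet> (M *v v) > 0"
    and max: "\<And>u. (M *v u) \<bullet> (F *v (M *v u)) \<le> lam * (u \<bullet> (M *v u))"
    and at_u0: "(M *v u0) \<bullet> (F *v (M *v u0)) = lam * (u0 \<bullet> (M *v u0))"
  shows "F *v (M *v u0) = lam *\<^sub>R u0"
proof -
  txt \<open>By maximality K is positive semidefinite, and its form vanishes at u0.\<close>
  define K where "K = lam *\<^sub>R M - M ** F ** M"
  have transpose_diff: "transpose (A - B) = transpose A - transpose B" for A B :: "real^'n^'n"
    by (simp add: transpose_def vec_eq_iff)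
  have K_sym: "transpose K = K"
    by (simp add: K_def transpose_diff transpose_scalar matrix_transpose_mul matrix_mul_assoc F_sym M_sym)
  have K_mult: "K *v v = lam *\<^sub>R (M *v v) - M *v (F *v (M *v v))" for v
    by (simp add: K_def matrix_vector_mult_diff_rdistrib scaleR_matrix_vector_assoc[symmetric]
        matrix_vector_mul_assoc[symmetric])
  have K_form: "v \<bullet> (K *v v) = lam * (v \<bullet> (M *v v)) - (M *v v) \<bullet> (F *v (M *v v))" for v
    by (simp add: K_mult inner_diff_right symmetric_matrix_inner[OF M_sym, of v])
  have "K *v u0 = 0"
    using K_sym max at_u0 by (intro psd_form_eq_0_imp_kernel) (auto simp: K_form)
  then have "M *v (lam *\<^sub>R u0 - F *v (M *v u0)) = 0"
    by (simp add: K_mult matrix_vector_mult_diff_distrib matrix_vector_mult_scaleR)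
  then show ?thesis
    using M_pd[of "lam *\<^sub>R u0 - F *v (M *v u0)"] by force
qed

lemma largest_eigenvalue_eqI:
  fixes F M :: "real^'n^'n"
  assumes F_sym: "transpose F = F" and M_sym: "transpose M = M"
    and M_pd: "\<And>v. v \<noteq> 0 \<Longrightarrow> v \<bullet> (M *v v) > 0"
    and "u0 \<noteq> 0" and eig: "F *v (M *v u0) = lam *\<^sub>R u0"
    and max: "\<And>u. (M *v u) \<bullet> (F *v (M *v u)) \<le> lam * (u \<bullet> (M *v u))"
  shows "largest_eigenvalue (F ** M) = lam"
  unfolding largest_eigenvalue_def
proof (rule Max_eqI)
  show "finite {l. \<exists>v. v \<noteq> 0 \<and> (F ** M) *v v = l *\<^sub>R v}"
    by (rule finite_eigenvalues_symmetric_mult_pos_def[OF F_sym M_sym M_pd])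
  show "lam \<in> {l. \<exists>v. v \<noteq> 0 \<and> (F ** M) *v v = l *\<^sub>R v}"
    using eig \<open>u0 \<noteq> 0\<close> by (auto simp: matrix_vector_mul_assoc[symmetric])
  fix mu assume "mu \<in> {l. \<exists>v. v \<noteq> 0 \<and> (F ** M) *v v = l *\<^sub>R v}"
  then obtain v where "v \<noteq> 0" "F *v (M *v v) = mu *\<^sub>R v"
    by (auto simp: matrix_vector_mul_assoc)
  then have "mu * (v \<bullet> (M *v v)) \<le> lam * (v \<bullet> (M *v v))"
    using max[of v] by (simp add: inner_commute)
  then show "mu \<le> lam" using M_pd[OF \<open>v \<noteq> 0\<close>] by simp
qed

lemma largest_eigenvalue_symmetric_mult_pos_def:
  fixes F M :: "real^'n^'n"
  assumes F_sym: "transpose F = F" and M_sym: "transpose M = M"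
    and M_pd: "\<And>v. v \<noteq> 0 \<Longrightarrow> v \<bullet> (M *v v) > 0"
  obtains u0 where "u0 \<noteq> 0" "F *v (M *v u0) = largest_eigenvalue (F ** M) *\<^sub>R u0"
    "\<And>u. (M *v u) \<bullet> (F *v (M *v u)) \<le> largest_eigenvalue (F ** M) * (u \<bullet> (M *v u))"
proof -
  obtain u0 lam where "u0 \<noteq> 0" and at_u0: "(M *v u0) \<bullet> (F *v (M *v u0)) = lam * (u0 \<bullet> (M *v u0))"
    and max: "\<And>u. (M *v u) \<bullet> (F *v (M *v u)) \<le> lam * (u \<bullet> (M *v u))"
    using Rayleigh_quotient_attains_max[OF M_pd] by blast
  have "F *v (M *v u0) = lam *\<^sub>R u0"
    by (rule Rayleigh_quotient_max_imp_eigenvector[OF F_sym M_sym M_pd max at_u0])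
  moreover from this have "largest_eigenvalue (F ** M) = lam"
    using largest_eigenvalue_eqI[OF F_sym M_sym M_pd \<open>u0 \<noteq> 0\<close> _ max] by blast
  ultimately show thesis using that \<open>u0 \<noteq> 0\<close> max by simp
qed

section \<open>The amplitude\<close>

lemma admissibleD:
  assumes "admissible \<Omega> T"
  shows "T differentiable (at x)" "continuous_on UNIV T" "continuous_on UNIV (pderiv_i i T)"
    "integrable lborel (\<lambda>q. (\<Omega> q)\<^sup>2 * (T q)\<^sup>2)" "integrable lborel (\<lambda>q. (\<Omega> q)\<^sup>2 * pderiv_i i T q)"
proof -
  show "T differentiable (at x)" for x
    using assms by (simp add: admissible_def C1_fun_def)
  then show "continuous_on UNIV T" by (rule continuous_on_UNIV_if_differentiable)
  have "continuous_on UNIV (grad T)" using assms by (simp add: admissible_def C1_fun_def)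
  then have "continuous_on UNIV (\<lambda>x. grad T x $ i)" by (rule continuous_on_component)
  then show "continuous_on UNIV (pderiv_i i T)" by simp
  show "integrable lborel (\<lambda>q. (\<Omega> q)\<^sup>2 * (T q)\<^sup>2)" "integrable lborel (\<lambda>q. (\<Omega> q)\<^sup>2 * pderiv_i i T q)"
    using assms by (simp_all add: admissible_def)
qed

locale amplitude =
  fixes \<Omega> :: "real^'n \<Rightarrow> real"
  assumes Omega_pos: "\<And>q. \<Omega> q > 0"
    and Omega_C2: "C2_fun \<Omega>"
    and Omega_L2: "integrable lborel (\<lambda>q. (\<Omega> q)\<^sup>2)"
    and Omega_norm: "integral\<^sup>L lborel (\<lambda>q. (\<Omega> q)\<^sup>2) = 1"
    and fisher_finite: "\<And>i j. integrable lborel (\<lambda>q. grad \<Omega> q $ i * grad \<Omega> q $ j)"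
    and hess_finite: "\<And>i j. integrable lborel (\<lambda>q. \<Omega> q * hess \<Omega> q $ i $ j)"
begin

lemma Omega_differentiable: "\<Omega> differentiable (at x)"
  using Omega_C2 by (simp add: C2_fun_def C1_fun_def)

lemma Omega_continuous: "continuous_on UNIV \<Omega>"
  by (rule continuous_on_UNIV_if_differentiable[OF Omega_differentiable])

lemma Omega_nonzero: "\<Omega> q \<noteq> 0"
  using Omega_pos[of q] by simp

lemma pderiv_Omega_continuous: "continuous_on UNIV (pderiv_i k \<Omega>)"
proof -
  have "continuous_on UNIV (grad \<Omega>)" using Omega_C2 by (simp add: C2_fun_def C1_fun_def)
  then have "continuous_on UNIV (\<lambda>x. grad \<Omega> x $ k)" by (rule continuous_on_component)
  then show ?thesis by simp
qed

lemma pderiv_Omega_differentiable: "pderiv_i k \<Omega> differentiable (at x)"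
proof -
  have "grad \<Omega> differentiable (at x)" using Omega_C2 by (simp add: C2_fun_def)
  then obtain D where "(grad \<Omega> has_derivative D) (at x)" by (auto simp: differentiable_def)
  from bounded_linear.has_derivative[OF bounded_linear_vec_nth[of k] this]
  show ?thesis by (auto simp: differentiable_def)
qed

lemma hess_Omega_continuous: "continuous_on UNIV (pderiv_i i (pderiv_i k \<Omega>))"
proof -
  have "continuous_on UNIV (hess \<Omega>)" using Omega_C2 by (simp add: C2_fun_def)
  then have "continuous_on UNIV (\<lambda>x. hess \<Omega> x $ i $ k)" by (intro continuous_on_component)
  then show ?thesis by simp
qed

lemma integrable_pderiv_Omega_mult: "integrable lborel (\<lambda>q. pderiv_i i \<Omega> q * pderiv_i j \<Omega> q)"
  using fisher_finite[of i j] by simp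

lemma integrable_Omega_mult_hess: "integrable lborel (\<lambda>q. \<Omega> q * pderiv_i i (pderiv_i k \<Omega>) q)"
  using hess_finite[of i k] by simp

lemma integrable_weighted_admissible:
  assumes "admissible \<Omega> T"
  shows "integrable lborel (\<lambda>q. (\<Omega> q)\<^sup>2 * T q)"
proof (rule integrable_continuous_dominated)
  show "integrable lborel (\<lambda>q. (\<Omega> q)\<^sup>2 + (\<Omega> q)\<^sup>2 * (T q)\<^sup>2)"
    using Omega_L2 admissibleD(4)[OF assms] by simp
  show "continuous_on UNIV (\<lambda>q. (\<Omega> q)\<^sup>2 * T q)"
    using Omega_continuous admissibleD(2)[OF assms] by (intro continuous_intros)
  have "\<bar>t\<bar> \<le> 1 + t\<^sup>2" for t :: real
    using sum_squares_bound[of "\<bar>t\<bar>" 1] by (simp add: power2_abs)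
  then show "\<bar>(\<Omega> x)\<^sup>2 * T x\<bar> \<le> (\<Omega> x)\<^sup>2 + (\<Omega> x)\<^sup>2 * (T x)\<^sup>2" for x
    using mult_left_mono[of "\<bar>T x\<bar>" "1 + (T x)\<^sup>2" "(\<Omega> x)\<^sup>2"] by (simp add: abs_mult algebra_simps)
qed

lemma integrable_admissible_Omega_pderiv:
  assumes "admissible \<Omega> T"
  shows "integrable lborel (\<lambda>q. T q * \<Omega> q * pderiv_i i \<Omega> q)"
proof (rule integrable_continuous_dominated)
  show "integrable lborel (\<lambda>q. (\<Omega> q)\<^sup>2 * (T q)\<^sup>2 + pderiv_i i \<Omega> q * pderiv_i i \<Omega> q)"
    using admissibleD(4)[OF assms] integrable_pderiv_Omega_mult[of i i] by simp
  show "continuous_on UNIV (\<lambda>q. T q * \<Omega> q * pderiv_i i \<Omega> q)"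
    using Omega_continuous admissibleD(2)[OF assms] pderiv_Omega_continuous by (intro continuous_intros)
  fix x
  have "2 * (\<bar>T x * \<Omega> x\<bar> * \<bar>pderiv_i i \<Omega> x\<bar>) \<le> (T x * \<Omega> x)\<^sup>2 + (pderiv_i i \<Omega> x)\<^sup>2"
    using sum_squares_bound[of "\<bar>T x * \<Omega> x\<bar>" "\<bar>pderiv_i i \<Omega> x\<bar>"] by (simp add: power2_abs)
  moreover have "0 \<le> \<bar>T x * \<Omega> x\<bar> * \<bar>pderiv_i i \<Omega> x\<bar>" by simp
  ultimately have "\<bar>T x * \<Omega> x\<bar> * \<bar>pderiv_i i \<Omega> x\<bar> \<le> (T x * \<Omega> x)\<^sup>2 + (pderiv_i i \<Omega> x)\<^sup>2"
    by linarith
  then show "\<bar>T x * \<Omega> x * pderiv_i i \<Omega> x\<bar> \<le> (\<Omega> x)\<^sup>2 * (T x)\<^sup>2 + pderiv_i i \<Omega> x * pderiv_i i \<Omega> x"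
    by (simp add: abs_mult power2_eq_square algebra_simps)
qed

lemma wmean_pderiv_admissible:
  assumes "admissible \<Omega> T"
  shows "wmean \<Omega> (pderiv_i i T) = -2 * integral\<^sup>L lborel (\<lambda>q. T q * \<Omega> q * pderiv_i i \<Omega> q)"
proof -
  define f where "f q = \<Omega> q * (\<Omega> q * T q)" for q
  have f_diff: "f differentiable (at x)" for x
    unfolding f_def using Omega_differentiable admissibleD(1)[OF assms] by (intro differentiable_mult)
  have f_pderiv: "pderiv_i i f = (\<lambda>q. 2 * (T q * \<Omega> q * pderiv_i i \<Omega> q) + (\<Omega> q)\<^sup>2 * pderiv_i i T q)"
    unfolding f_def using Omega_differentiable admissibleD(1)[OF assms]
    by (simp add: fun_eq_iff pderiv_i_mult differentiable_mult algebra_simps power2_eq_square)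
  note int1 = integrable_admissible_Omega_pderiv[OF assms, of i]
  note int2 = admissibleD(5)[OF assms, of i]
  have "integral\<^sup>L lborel (pderiv_i i f) = 0"
  proof (rule integral_pderiv_i_eq_0[OF f_diff])
    show "continuous_on UNIV (pderiv_i i f)" unfolding f_pderiv
      using Omega_continuous admissibleD(2,3)[OF assms] pderiv_Omega_continuous by (intro continuous_intros)
    show "integrable lborel f"
      using integrable_weighted_admissible[OF assms] unfolding f_def[abs_def]
      by (simp add: power2_eq_square mult.assoc)
    show "integrable lborel (pderiv_i i f)" unfolding f_pderiv using int1 int2 by simp
  qed
  then show ?thesis
    unfolding f_pderiv using int1 int2 by (simp add: wmean_def)
qed

lemma admissible_one: "admissible \<Omega> (\<lambda>q. 1)"
proof -
  have "grad (\<lambda>q::real^'n. 1::real) = (\<lambda>q. 0)"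
    by (simp add: grad_def vec_eq_iff fun_eq_iff)
  then show ?thesis using Omega_L2 by (simp add: admissible_def C1_fun_def)
qed

lemma integrable_Omega_mult_pderiv: "integrable lborel (\<lambda>q. \<Omega> q * pderiv_i i \<Omega> q)"
  using integrable_admissible_Omega_pderiv[OF admissible_one, of i] by simp

lemma integral_Omega_mult_pderiv: "integral\<^sup>L lborel (\<lambda>q. \<Omega> q * pderiv_i i \<Omega> q) = 0"
  using wmean_pderiv_admissible[OF admissible_one, of i] by (simp add: wmean_def)

lemma integral_Omega_mult_hess:
  "integral\<^sup>L lborel (\<lambda>q. \<Omega> q * pderiv_i i (pderiv_i j \<Omega>) q) =
    - integral\<^sup>L lborel (\<lambda>q. pderiv_i i \<Omega> q * pderiv_i j \<Omega> q)"
proof -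
  define f where "f q = \<Omega> q * pderiv_i j \<Omega> q" for q
  have f_diff: "f differentiable (at x)" for x
    unfolding f_def using Omega_differentiable pderiv_Omega_differentiable by (intro differentiable_mult)
  have f_pderiv: "pderiv_i i f = (\<lambda>q. pderiv_i i \<Omega> q * pderiv_i j \<Omega> q + \<Omega> q * pderiv_i i (pderiv_i j \<Omega>) q)"
    unfolding f_def using Omega_differentiable pderiv_Omega_differentiable
    by (simp add: fun_eq_iff pderiv_i_mult)
  have "integral\<^sup>L lborel (pderiv_i i f) = 0"
  proof (rule integral_pderiv_i_eq_0[OF f_diff])
    show "continuous_on UNIV (pderiv_i i f)" unfolding f_pderiv
      using Omega_continuous pderiv_Omega_continuous hess_Omega_continuous by (intro continuous_intros)
    show "integrable lborel f"
      unfolding f_def[abs_def] by (rule integrable_Omega_mult_pderiv)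
    show "integrable lborel (pderiv_i i f)"
      unfolding f_pderiv using integrable_pderiv_Omega_mult integrable_Omega_mult_hess by simp
  qed
  then show ?thesis
    unfolding f_pderiv using integrable_pderiv_Omega_mult integrable_Omega_mult_hess by simp
qed

definition fisher :: "real^'n^'n" where
  "fisher = (\<chi> i j. 4 * integral\<^sup>L lborel (\<lambda>q. pderiv_i i \<Omega> q * pderiv_i j \<Omega> q))"

text \<open>score w = (1/2) w . d ln Omega^2. The extremizer T_* is score (M u) for an eigenvector u
  of F M to its largest eigenvalue.\<close>
definition score :: "real^'n \<Rightarrow> real^'n \<Rightarrow> real" where
  "score w q = (w \<bullet> grad \<Omega> q) / \<Omega> q"

lemma inner_grad_Omega: "w \<bullet> grad \<Omega> q = (\<Sum>k\<in>UNIV. w $ k * pderiv_i k \<Omega> q)"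
  by (simp add: inner_vec_def)

lemma fisher_sym: "transpose fisher = fisher"
  by (simp add: transpose_def vec_eq_iff fisher_def mult.commute)

lemma inner_grad_mult_eq_sum:
  "(v \<bullet> grad \<Omega> q) * (w \<bullet> grad \<Omega> q) =
    (\<Sum>k\<in>UNIV. \<Sum>l\<in>UNIV. v $ k * w $ l * (pderiv_i k \<Omega> q * pderiv_i l \<Omega> q))"
  by (simp add: inner_grad_Omega sum_product algebra_simps)

lemma integrable_inner_grad_mult: "integrable lborel (\<lambda>q. (v \<bullet> grad \<Omega> q) * (w \<bullet> grad \<Omega> q))"
  unfolding inner_grad_mult_eq_sum
  by (intro Bochner_Integration.integrable_sum integrable_mult_right integrable_pderiv_Omega_mult)

lemma integral_inner_grad_mult:
  "integral\<^sup>L lborel (\<lambda>q. (v \<bullet> grad \<Omega> q) * (w \<bullet> grad \<Omega> q)) = v \<bullet> (fisher *v w) / 4"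
  unfolding inner_grad_mult_eq_sum using integrable_pderiv_Omega_mult
  by (simp add: Bochner_Integration.integral_sum Bochner_Integration.integrable_sum integrable_mult_right
      inner_vec_def matrix_vector_mult_def fisher_def sum_distrib_left sum_divide_distrib algebra_simps)

lemma fisher_psd: "0 \<le> w \<bullet> (fisher *v w)"
  using Bochner_Integration.integral_nonneg[of lborel "\<lambda>q. (w \<bullet> grad \<Omega> q) * (w \<bullet> grad \<Omega> q)"]
  by (simp add: integral_inner_grad_mult)

lemma Omega_mult_inner_grad_eq_sum:
  "\<Omega> q * (w \<bullet> grad \<Omega> q) = (\<Sum>k\<in>UNIV. w $ k * (\<Omega> q * pderiv_i k \<Omega> q))"
  by (simp add: inner_grad_Omega sum_distrib_left algebra_simps)

lemma integrable_Omega_mult_inner_grad: "integrable lborel (\<lambda>q. \<Omega> q * (w \<bullet> grad \<Omega> q))"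
  unfolding Omega_mult_inner_grad_eq_sum
  by (intro Bochner_Integration.integrable_sum integrable_mult_right integrable_Omega_mult_pderiv)

lemma integral_Omega_mult_inner_grad: "integral\<^sup>L lborel (\<lambda>q. \<Omega> q * (w \<bullet> grad \<Omega> q)) = 0"
  unfolding Omega_mult_inner_grad_eq_sum using integrable_Omega_mult_pderiv
  by (simp add: Bochner_Integration.integral_sum integral_Omega_mult_pderiv)

lemma score_differentiable: "score w differentiable (at x)"
  unfolding score_def[abs_def] inner_grad_Omega
  using pderiv_Omega_differentiable Omega_differentiable Omega_nonzero
  by (intro differentiable_divide differentiable_sum differentiable_mult differentiable_const) auto

lemma weighted_pderiv_score:
  "(\<Omega> q)\<^sup>2 * pderiv_i i (score w) q =
    \<Omega> q * (\<Sum>k\<in>UNIV. w $ k * pderiv_i i (pderiv_i k \<Omega>) q) - (w \<bullet> grad \<Omega> q) * pderiv_i i \<Omega> q"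
proof -
  have "pderiv_i i (\<lambda>q. w \<bullet> grad \<Omega> q) q = (\<Sum>k\<in>UNIV. w $ k * pderiv_i i (pderiv_i k \<Omega>) q)"
    unfolding inner_grad_Omega using pderiv_Omega_differentiable
    by (subst pderiv_i_sum) (auto intro!: differentiable_mult simp: pderiv_i_cmult)
  moreover have "(\<lambda>q. w \<bullet> grad \<Omega> q) differentiable (at q)"
    unfolding inner_grad_Omega using pderiv_Omega_differentiable
    by (intro differentiable_sum differentiable_mult differentiable_const) auto
  ultimately show ?thesis
    unfolding score_def[abs_def] using Omega_differentiable Omega_nonzero[of q]
    by (simp add: pderiv_i_divide field_simps power2_eq_square)
qed

lemma admissible_score: "admissible \<Omega> (score w)"
  unfolding admissible_def C1_fun_def
proof (intro conjI allI)
  show "score w differentiable (at x)" for x by (rule score_differentiable)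
  have "grad (score w) = (\<lambda>q. \<chi> i. (\<Omega> q * (\<Sum>k\<in>UNIV. w $ k * pderiv_i i (pderiv_i k \<Omega>) q)
      - (\<Sum>k\<in>UNIV. w $ k * pderiv_i k \<Omega> q) * pderiv_i i \<Omega> q) / (\<Omega> q)\<^sup>2)"
    using weighted_pderiv_score Omega_nonzero
    by (simp add: fun_eq_iff vec_eq_iff inner_grad_Omega field_simps)
  then show "continuous_on UNIV (grad (score w))"
    using hess_Omega_continuous Omega_continuous pderiv_Omega_continuous Omega_nonzero
    by (simp only:) (intro continuous_intros; auto)
  have "(\<lambda>q. (\<Omega> q)\<^sup>2 * (score w q)\<^sup>2) = (\<lambda>q. (w \<bullet> grad \<Omega> q) * (w \<bullet> grad \<Omega> q))"
    using Omega_nonzero by (simp add: score_def fun_eq_iff power2_eq_square)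
  then show "integrable lborel (\<lambda>q. (\<Omega> q)\<^sup>2 * (score w q)\<^sup>2)"
    using integrable_inner_grad_mult by simp
  fix i
  have "(\<lambda>q. \<Omega> q * (\<Sum>k\<in>UNIV. w $ k * pderiv_i i (pderiv_i k \<Omega>) q)) =
      (\<lambda>q. \<Sum>k\<in>UNIV. w $ k * (\<Omega> q * pderiv_i i (pderiv_i k \<Omega>) q))"
    by (simp add: fun_eq_iff sum_distrib_left algebra_simps)
  moreover have "(\<lambda>q. (w \<bullet> grad \<Omega> q) * pderiv_i i \<Omega> q) = (\<lambda>q. (w \<bullet> grad \<Omega> q) * (axis i 1 \<bullet> grad \<Omega> q))"
    by (simp add: inner_axis')
  ultimately show "integrable lborel (\<lambda>q. (\<Omega> q)\<^sup>2 * grad (score w) q $ i)"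
    using integrable_Omega_mult_hess integrable_inner_grad_mult
    by (simp add: weighted_pderiv_score Bochner_Integration.integrable_sum)
qed

lemma wmean_score: "wmean \<Omega> (score w) = 0"
proof -
  have "(\<lambda>q. (\<Omega> q)\<^sup>2 * score w q) = (\<lambda>q. \<Omega> q * (w \<bullet> grad \<Omega> q))"
    using Omega_nonzero by (simp add: score_def fun_eq_iff power2_eq_square)
  then show ?thesis by (simp add: wmean_def integral_Omega_mult_inner_grad)
qed

lemma wcov_score: "wcov \<Omega> (score w) (score w) = w \<bullet> (fisher *v w) / 4"
proof -
  have "(\<lambda>q. (\<Omega> q)\<^sup>2 * (score w q * score w q)) = (\<lambda>q. (w \<bullet> grad \<Omega> q) * (w \<bullet> grad \<Omega> q))"
    using Omega_nonzero by (simp add: score_def fun_eq_iff power2_eq_square)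
  then show ?thesis unfolding wcov_def wmean_score by (simp add: wmean_def integral_inner_grad_mult)
qed

lemma wmean_pderiv_score: "wmean \<Omega> (pderiv_i i (score w)) = - (fisher *v w) $ i / 2"
proof -
  have "(\<lambda>q. score w q * \<Omega> q * pderiv_i i \<Omega> q) = (\<lambda>q. (axis i 1 \<bullet> grad \<Omega> q) * (w \<bullet> grad \<Omega> q))"
    using Omega_nonzero by (simp add: score_def fun_eq_iff inner_axis')
  then have "wmean \<Omega> (pderiv_i i (score w)) = - 2 * (axis i 1 \<bullet> (fisher *v w) / 4)"
    unfolding wmean_pderiv_admissible[OF admissible_score] integral_inner_grad_mult[symmetric] by simp
  then show ?thesis by (simp add: inner_axis')
qed

lemma wmean_vec_grad_score: "wmean_vec \<Omega> (grad (score w)) = (- 1 / 2) *\<^sub>R (fisher *v w)"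
  by (simp add: wmean_vec_def vec_eq_iff wmean_pderiv_score)

lemma pderiv_ln_Omega_squared: "pderiv_i j (\<lambda>q. ln ((\<Omega> q)\<^sup>2)) = (\<lambda>q. 2 * score (axis j 1) q)"
proof
  fix q
  have "pderiv_i j (\<lambda>q. ln ((\<Omega> q)\<^sup>2)) q = pderiv_i j (\<lambda>q. \<Omega> q * \<Omega> q) q / (\<Omega> q)\<^sup>2"
    using Omega_differentiable Omega_pos[of q] by (simp add: pderiv_i_ln power2_eq_square differentiable_mult)
  also have "\<dots> = 2 * score (axis j 1) q"
    using Omega_differentiable Omega_nonzero[of q]
    by (simp add: pderiv_i_mult score_def inner_axis' power2_eq_square field_simps)
  finally show "pderiv_i j (\<lambda>q. ln ((\<Omega> q)\<^sup>2)) q = 2 * score (axis j 1) q" .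
qed

lemma Qmat_eq_fisher_mult: "Qmat M \<Omega> = fisher ** M"
proof -
  have "- wmean \<Omega> (\<lambda>q. hess (\<lambda>q. ln ((\<Omega> q)\<^sup>2)) q $ i $ j) = fisher $ i $ j" for i j
  proof -
    have "(\<lambda>q. hess (\<lambda>q. ln ((\<Omega> q)\<^sup>2)) q $ i $ j) = (\<lambda>q. 2 * pderiv_i i (score (axis j 1)) q)"
      using score_differentiable by (simp add: pderiv_ln_Omega_squared pderiv_i_cmult fun_eq_iff)
    then have "wmean \<Omega> (\<lambda>q. hess (\<lambda>q. ln ((\<Omega> q)\<^sup>2)) q $ i $ j) = 2 * wmean \<Omega> (pderiv_i i (score (axis j 1)))"
      by (simp add: wmean_def mult.left_commute[of _ 2])
    then show ?thesis
      by (simp add: wmean_pderiv_score matrix_vector_mult_basis column_def)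
  qed
  then have "- wmean_mat \<Omega> (hess (\<lambda>q. ln ((\<Omega> q)\<^sup>2))) = fisher"
    by (simp add: wmean_mat_def vec_eq_iff)
  then show ?thesis by (simp add: Qmat_def)
qed

lemma quadratic_form_grad_eq_sum:
  "grad \<Omega> q \<bullet> (M *v grad \<Omega> q) = (\<Sum>i\<in>UNIV. \<Sum>j\<in>UNIV. M $ i $ j * (pderiv_i i \<Omega> q * pderiv_i j \<Omega> q))"
  by (simp add: inner_vec_def matrix_vector_mult_def sum_distrib_left algebra_simps)

lemma integrable_quadratic_form_grad: "integrable lborel (\<lambda>q. grad \<Omega> q \<bullet> (M *v grad \<Omega> q))"
  unfolding quadratic_form_grad_eq_sum
  by (intro Bochner_Integration.integrable_sum integrable_mult_right integrable_pderiv_Omega_mult)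

lemma mean_quantum_potential_eq:
  "mean_quantum_potential hbar M \<Omega> = hbar\<^sup>2 / 2 * integral\<^sup>L lborel (\<lambda>q. grad \<Omega> q \<bullet> (M *v grad \<Omega> q))"
proof -
  have "(\<lambda>q. \<Omega> q * (\<Sum>i\<in>UNIV. \<Sum>j\<in>UNIV. M $ i $ j * hess \<Omega> q $ i $ j)) =
      (\<lambda>q. \<Sum>i\<in>UNIV. \<Sum>j\<in>UNIV. M $ i $ j * (\<Omega> q * pderiv_i i (pderiv_i j \<Omega>) q))"
    by (simp add: fun_eq_iff sum_distrib_left algebra_simps)
  then show ?thesis
    unfolding mean_quantum_potential_def quadratic_form_grad_eq_sum
    using integrable_Omega_mult_hess integrable_pderiv_Omega_mult
    by (simp add: Bochner_Integration.integral_sum Bochner_Integration.integrable_sum integrable_mult_right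
        integral_Omega_mult_hess sum_negf)
qed

lemma centered_admissible_square:
  assumes T: "admissible \<Omega> T"
  shows "integrable lborel (\<lambda>q. ((T q - wmean \<Omega> T) * \<Omega> q) * ((T q - wmean \<Omega> T) * \<Omega> q))"
    and "wcov \<Omega> T T = integral\<^sup>L lborel (\<lambda>q. ((T q - wmean \<Omega> T) * \<Omega> q) * ((T q - wmean \<Omega> T) * \<Omega> q))"
proof -
  define f where "f q = (T q - wmean \<Omega> T) * \<Omega> q" for q
  have ff: "(\<lambda>q. f q * f q) =
      (\<lambda>q. (\<Omega> q)\<^sup>2 * (T q)\<^sup>2 - 2 * wmean \<Omega> T * ((\<Omega> q)\<^sup>2 * T q) + (wmean \<Omega> T)\<^sup>2 * (\<Omega> q)\<^sup>2)"
    by (auto simp: f_def fun_eq_iff algebra_simps power2_eq_square)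
  note ints = admissibleD(4)[OF T] integrable_weighted_admissible[OF T] Omega_L2
  have "integrable lborel (\<lambda>q. f q * f q)" unfolding ff using ints by simp
  moreover have "wcov \<Omega> T T = integral\<^sup>L lborel (\<lambda>q. f q * f q)"
    unfolding ff using ints Omega_norm by (simp add: wcov_def wmean_def power2_eq_square)
  ultimately show "integrable lborel (\<lambda>q. ((T q - wmean \<Omega> T) * \<Omega> q) * ((T q - wmean \<Omega> T) * \<Omega> q))"
    and "wcov \<Omega> T T = integral\<^sup>L lborel (\<lambda>q. ((T q - wmean \<Omega> T) * \<Omega> q) * ((T q - wmean \<Omega> T) * \<Omega> q))"
    by (simp_all add: f_def)
qed

lemma wcov_nonneg: "admissible \<Omega> T \<Longrightarrow> 0 \<le> wcov \<Omega> T T"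
  using centered_admissible_square(2) by simp

lemma centered_admissible_mult_inner_grad:
  assumes T: "admissible \<Omega> T"
  shows "integrable lborel (\<lambda>q. ((T q - wmean \<Omega> T) * \<Omega> q) * (w \<bullet> grad \<Omega> q))"
    and "integral\<^sup>L lborel (\<lambda>q. ((T q - wmean \<Omega> T) * \<Omega> q) * (w \<bullet> grad \<Omega> q)) =
      - (w \<bullet> wmean_vec \<Omega> (grad T)) / 2"
proof -
  have fg: "(\<lambda>q. ((T q - wmean \<Omega> T) * \<Omega> q) * (w \<bullet> grad \<Omega> q)) = (\<lambda>q. (\<Sum>k\<in>UNIV. w $ k * (T q * \<Omega> q * pderiv_i k \<Omega> q))
      - wmean \<Omega> T * (\<Omega> q * (w \<bullet> grad \<Omega> q)))"
    by (simp add: fun_eq_iff inner_grad_Omega sum_distrib_left algebra_simps)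
  have int_sum: "integrable lborel (\<lambda>q. \<Sum>k\<in>UNIV. w $ k * (T q * \<Omega> q * pderiv_i k \<Omega> q))"
    using integrable_admissible_Omega_pderiv[OF T]
    by (intro Bochner_Integration.integrable_sum integrable_mult_right)
  show "integrable lborel (\<lambda>q. ((T q - wmean \<Omega> T) * \<Omega> q) * (w \<bullet> grad \<Omega> q))"
    unfolding fg using int_sum integrable_Omega_mult_inner_grad by simp
  have "integral\<^sup>L lborel (\<lambda>q. ((T q - wmean \<Omega> T) * \<Omega> q) * (w \<bullet> grad \<Omega> q)) =
      integral\<^sup>L lborel (\<lambda>q. \<Sum>k\<in>UNIV. w $ k * (T q * \<Omega> q * pderiv_i k \<Omega> q))
      - wmean \<Omega> T * integral\<^sup>L lborel (\<lambda>q. \<Omega> q * (w \<bullet> grad \<Omega> q))"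
    unfolding fg using int_sum integrable_Omega_mult_inner_grad by simp
  also have "\<dots> = (\<Sum>k\<in>UNIV. w $ k * integral\<^sup>L lborel (\<lambda>q. T q * \<Omega> q * pderiv_i k \<Omega> q))"
    using integrable_admissible_Omega_pderiv[OF T]
    by (simp add: integral_Omega_mult_inner_grad Bochner_Integration.integral_sum)
  also have "\<dots> = - (w \<bullet> wmean_vec \<Omega> (grad T)) / 2"
    by (simp add: inner_vec_def wmean_vec_def wmean_pderiv_admissible[OF T] sum_distrib_left
        sum_divide_distrib sum_negf algebra_simps)
  finally show "integral\<^sup>L lborel (\<lambda>q. ((T q - wmean \<Omega> T) * \<Omega> q) * (w \<bullet> grad \<Omega> q)) =
      - (w \<bullet> wmean_vec \<Omega> (grad T)) / 2" .
qed

theorem Cramer_Rao: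
  assumes T: "admissible \<Omega> T"
  shows "(w \<bullet> wmean_vec \<Omega> (grad T))\<^sup>2 \<le> wcov \<Omega> T T * (w \<bullet> (fisher *v w))"
proof -
  let ?f = "\<lambda>q. (T q - wmean \<Omega> T) * \<Omega> q"
  have "(integral\<^sup>L lborel (\<lambda>q. ?f q * (w \<bullet> grad \<Omega> q)))\<^sup>2
      \<le> integral\<^sup>L lborel (\<lambda>q. ?f q * ?f q) * integral\<^sup>L lborel (\<lambda>q. (w \<bullet> grad \<Omega> q) * (w \<bullet> grad \<Omega> q))"
    using centered_admissible_square(1)[OF T] integrable_inner_grad_mult centered_admissible_mult_inner_grad(1)[OF T]
    by (rule integral_Cauchy_Schwarz)
  then show ?thesis
    unfolding centered_admissible_mult_inner_grad(2)[OF T] centered_admissible_square(2)[OF T, symmetric]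
      integral_inner_grad_mult
    by (simp add: power_divide)
qed

lemma LQ_score:
  assumes M_pd: "\<And>v. v \<noteq> 0 \<Longrightarrow> v \<bullet> (M *v v) > 0"
    and "u \<noteq> 0" and eig: "fisher *v (M *v u) = lam *\<^sub>R u"
  shows "LQ hbar M \<Omega> (score (M *v u)) = hbar\<^sup>2 / 8 * lam"
proof -
  define D where "D = u \<bullet> (M *v u)"
  have "D > 0" using M_pd[OF \<open>u \<noteq> 0\<close>] by (simp add: D_def)
  define c where "c = - lam / 2"
  have "wmean_vec \<Omega> (grad (score (M *v u))) = c *\<^sub>R u"
    by (simp add: wmean_vec_grad_score eig c_def)
  then have "wmean_vec \<Omega> (grad (score (M *v u))) \<bullet> (M *v wmean_vec \<Omega> (grad (score (M *v u))))
      = c\<^sup>2 * D"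
    by (simp add: D_def matrix_vector_mult_scaleR power2_eq_square)
  also have "\<dots> = lam\<^sup>2 / 4 * D"
    by (simp add: c_def power2_eq_square)
  finally have num: "wmean_vec \<Omega> (grad (score (M *v u))) \<bullet> (M *v wmean_vec \<Omega> (grad (score (M *v u))))
      = lam\<^sup>2 / 4 * D" .
  have cov: "wcov \<Omega> (score (M *v u)) (score (M *v u)) = lam / 4 * D"
    by (simp add: wcov_score eig D_def inner_commute)
  show ?thesis
    using \<open>D > 0\<close> by (cases "lam = 0") (simp_all add: LQ_def num cov power2_eq_square)
qed

lemma LQ_le:
  assumes M_pd: "\<And>v. v \<noteq> 0 \<Longrightarrow> v \<bullet> (M *v v) > 0"
    and max: "\<And>u. (M *v u) \<bullet> (fisher *v (M *v u)) \<le> lam * (u \<bullet> (M *v u))"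
    and T: "admissible \<Omega> T"
  shows "LQ hbar M \<Omega> T \<le> hbar\<^sup>2 / 8 * lam"
proof -
  define v where "v = wmean_vec \<Omega> (grad T)"
  define P where "P = v \<bullet> (M *v v)"
  define V where "V = wcov \<Omega> T T"
  have "0 \<le> V" using wcov_nonneg[OF T] by (simp add: V_def)
  have "0 \<le> P" using pos_def_nonneg[OF M_pd] by (simp add: P_def)
  have "P\<^sup>2 \<le> V * ((M *v v) \<bullet> (fisher *v (M *v v)))"
    using Cramer_Rao[OF T, of "M *v v"] by (simp add: P_def V_def v_def inner_commute)
  also have "\<dots> \<le> V * (lam * P)"
    using max[of v] \<open>0 \<le> V\<close> by (simp add: P_def mult_left_mono)
  finally have "P * P \<le> (V * lam) * P" by (simp add: power2_eq_square mult.assoc)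
  moreover have "0 \<le> lam"
  proof -
    let ?e = "axis undefined 1 :: real^'n"
    have "0 \<le> lam * (?e \<bullet> (M *v ?e))"
      using max[of ?e] fisher_psd[of "M *v ?e"] by linarith
    then show ?thesis using M_pd[of ?e] by (simp add: zero_le_mult_iff)
  qed
  ultimately have "P / V \<le> lam"
    using \<open>0 \<le> P\<close> \<open>0 \<le> V\<close> by (cases "P = 0 \<or> V = 0") (auto simp: divide_le_eq mult.commute)
  then have "hbar\<^sup>2 / 8 * (P / V) \<le> hbar\<^sup>2 / 8 * lam"
    by (rule mult_left_mono) simp
  then show ?thesis by (simp add: LQ_def P_def V_def v_def)
qed

lemma mean_quantum_potential_ge:
  assumes M_sym: "transpose M = M" and M_pd: "\<And>v. v \<noteq> 0 \<Longrightarrow> v \<bullet> (M *v v) > 0"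
    and "u \<noteq> 0" and eig: "fisher *v (M *v u) = lam *\<^sub>R u"
  shows "hbar\<^sup>2 / 8 * lam \<le> mean_quantum_potential hbar M \<Omega>"
proof -
  define D where "D = u \<bullet> (M *v u)"
  have "D > 0" using M_pd[OF \<open>u \<noteq> 0\<close>] by (simp add: D_def)
  have pointwise: "((M *v u) \<bullet> grad \<Omega> q) * ((M *v u) \<bullet> grad \<Omega> q) \<le> D * (grad \<Omega> q \<bullet> (M *v grad \<Omega> q))" for q
    using psd_Cauchy_Schwarz[OF M_sym pos_def_nonneg[OF M_pd], of u "grad \<Omega> q"]
    by (simp add: D_def symmetric_matrix_inner[OF M_sym] power2_eq_square)
  have "lam * D = (M *v u) \<bullet> (fisher *v (M *v u))"
    by (simp add: eig D_def inner_commute)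
  also have "\<dots> = 4 * integral\<^sup>L lborel (\<lambda>q. ((M *v u) \<bullet> grad \<Omega> q) * ((M *v u) \<bullet> grad \<Omega> q))"
    unfolding integral_inner_grad_mult by simp
  also have "\<dots> \<le> 4 * integral\<^sup>L lborel (\<lambda>q. D * (grad \<Omega> q \<bullet> (M *v grad \<Omega> q)))"
    using pointwise integrable_inner_grad_mult integrable_quadratic_form_grad
    by (intro mult_left_mono integral_mono) auto
  finally have "lam \<le> 4 * integral\<^sup>L lborel (\<lambda>q. grad \<Omega> q \<bullet> (M *v grad \<Omega> q))"
    using \<open>D > 0\<close> by (simp add: mult.commute)
  then have "hbar\<^sup>2 / 8 * lam \<le> hbar\<^sup>2 / 8 * (4 * integral\<^sup>L lborel (\<lambda>q. grad \<Omega> q \<bullet> (M *v grad \<Omega> q)))"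
    by (rule mult_left_mono) simp
  then show ?thesis
    by (simp add: mean_quantum_potential_eq)
qed

end

theorem theorem2:
  fixes hbar :: real and M :: "real^'n^'n" and \<Omega> :: "real^'n \<Rightarrow> real"
  assumes hbar_pos: "hbar > 0"
    and M_sym: "transpose M = M"
    and M_pd: "\<And>v. v \<noteq> 0 \<Longrightarrow> v \<bullet> (M *v v) > 0"
    and Omega_pos: "\<And>q. \<Omega> q > 0"
    and Omega_C2: "C2_fun \<Omega>"
    and Omega_L2: "integrable lborel (\<lambda>q. (\<Omega> q)\<^sup>2)"
    and Omega_norm: "integral\<^sup>L lborel (\<lambda>q. (\<Omega> q)\<^sup>2) = 1"
    and Omega_decay: "(\<Omega> \<longlongrightarrow> 0) at_infinity"
    and fisher_finite: "\<And>i j. integrable lborel (\<lambda>q. grad \<Omega> q $ i * grad \<Omega> q $ j)"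
    and hess_finite: "\<And>i j. integrable lborel (\<lambda>q. \<Omega> q * hess \<Omega> q $ i $ j)"
  shows "(\<exists>Tstar. admissible \<Omega> Tstar
            \<and> (\<forall>T. admissible \<Omega> T \<longrightarrow> LQ hbar M \<Omega> T \<le> LQ hbar M \<Omega> Tstar)
            \<and> LQ hbar M \<Omega> Tstar = hbar\<^sup>2 / 8 * largest_eigenvalue (Qmat M \<Omega>))
         \<and> mean_quantum_potential hbar M \<Omega> \<ge> hbar\<^sup>2 / 8 * largest_eigenvalue (Qmat M \<Omega>)"
proof -
  interpret amplitude \<Omega>
    using Omega_pos Omega_C2 Omega_L2 Omega_norm fisher_finite hess_finite by unfold_locales
  obtain u where "u \<noteq> 0" and eig: "fisher *v (M *v u) = largest_eigenvalue (fisher ** M) *\<^sub>R u"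
    and max: "\<And>v. (M *v v) \<bullet> (fisher *v (M *v v)) \<le> largest_eigenvalue (fisher ** M) * (v \<bullet> (M *v v))"
    using largest_eigenvalue_symmetric_mult_pos_def[OF fisher_sym M_sym M_pd] by blast
  have LQ_max: "LQ hbar M \<Omega> (score (M *v u)) = hbar\<^sup>2 / 8 * largest_eigenvalue (fisher ** M)"
    by (rule LQ_score[OF M_pd \<open>u \<noteq> 0\<close> eig])
  show ?thesis
    unfolding Qmat_eq_fisher_mult
  proof (intro conjI exI[of _ "score (M *v u)"] allI impI)
    show "admissible \<Omega> (score (M *v u))" by (rule admissible_score)
    show "LQ hbar M \<Omega> T \<le> LQ hbar M \<Omega> (score (M *v u))" if "admissible \<Omega> T" for T
      unfolding LQ_max by (rule LQ_le[OF M_pd max that])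
    show "hbar\<^sup>2 / 8 * largest_eigenvalue (fisher ** M) \<le> mean_quantum_potential hbar M \<Omega>"
      by (rule mean_quantum_potential_ge[OF M_sym M_pd \<open>u \<noteq> 0\<close> eig])
  qed (rule LQ_max)
qed

end
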